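(* Let $k\ge 4$ be an integer and let $C$ be a circular ordering of the vertex set of the path $P_k$. Then $(P_k,C)$ is $LF$-free if and only if it is a $k$-zigzag.
   Context: A circular ordering of a finite set is obtained by placing its elements at distinct points of a circle. A circularly ordered graph is a graph with a circular ordering of its vertices; isomorphism means a graph isomorphism preserving circular orderings; induced circularly ordered subgraphs are induced subgraphs with the restricted ordering. $LF$ consists of the following circularly ordered graphs (vertices $v_1,v_2,\dots$ clockwise in this order; listed edges are all edges): the triangle on $v_1,v_2,v_3$; on $v_1,\dots,v_4$: edges $v_1v_2,v_2v_3,v_3v_4,v_4v_1$; edges $v_1v_2,v_2v_4,v_4v_3,v_3v_1$; edges $v_1v_2,v_2v_3,v_3v_4$; edges $v_3v_1,v_1v_4,v_4v_2$; edges $v_3v_1,v_3v_2,v_3v_4$. $(P_k,C)$ is $LF$-free if it has no induced circularly ordered subgraph isomorphic to a member of $LF$. Let $Z$ be the circularly ordered graph on $v_1,\dots,v_4$ (clockwise) with edges $v_1v_2,v_2v_4,v_4v_3$, and $Z^\ast$ the one with edges $v_2v_1,v_1v_3,v_3v_4$. A $k$-zigzag is a circular ordering of $P_k$ in which every induced subgraph isomorphic to $P_4$ (with the restricted circular ordering) is isomorphic to $Z$ or $Z^\ast$. *)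

theory Defs
  imports Main
begin

text \<open>A circularly ordered graph is given by a vertex set V, a symmetric irreflexive
adjacency E, and an injective position map pos into a linear order; the vertices
are placed clockwise on the circle in increasing order of pos.\<close>

text \<open>Small pattern graphs: vertices 0..m-1 listed clockwise (v1 = 0, v2 = 1, ...),
edges given as a list of pairs.\<close>
definition pat_adj :: "(nat \<times> nat) list \<Rightarrow> nat \<Rightarrow> nat \<Rightarrow> bool" where
  "pat_adj es i j \<longleftrightarrow> (i, j) \<in> set es \<or> (j, i) \<in> set es"

text \<open>The induced circularly ordered subgraph on S is isomorphic (as a circularly
ordered graph) to the pattern (m, es): listing S clockwise as xs, some rotation of
this listing maps adjacency exactly onto the pattern adjacency.\<close>
definition co_iso_pattern ::
  "('a \<Rightarrow> 'a \<Rightarrow> bool) \<Rightarrow> ('a \<Rightarrow> 'b::linorder) \<Rightarrow> 'a set \<Rightarrow> nat \<Rightarrow> (nat \<times> nat) list \<Rightarrow> bool" where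
  "co_iso_pattern E pos S m es \<longleftrightarrow>
     (\<exists>xs. distinct xs \<and> set xs = S \<and> length xs = m \<and>
           sorted_wrt (\<lambda>u v. pos u < pos v) xs \<and>
           (\<exists>r<m. \<forall>i<m. \<forall>j<m.
              E (xs ! ((i + r) mod m)) (xs ! ((j + r) mod m)) = pat_adj es i j))"

text \<open>The family LF (0-indexed: v1 = 0, ..., v4 = 3).\<close>
definition LF :: "(nat \<times> (nat \<times> nat) list) set" where
  "LF = {(3, [(0,1),(1,2),(2,0)]),
         (4, [(0,1),(1,2),(2,3),(3,0)]),
         (4, [(0,1),(1,3),(3,2),(2,0)]),
         (4, [(0,1),(1,2),(2,3)]),
         (4, [(2,0),(0,3),(3,1)]),
         (4, [(2,0),(2,1),(2,3)])}"

definition LF_free :: "'a set \<Rightarrow> ('a \<Rightarrow> 'a \<Rightarrow> bool) \<Rightarrow> ('a \<Rightarrow> 'b::linorder) \<Rightarrow> bool" where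
  "LF_free V E pos \<longleftrightarrow>
     \<not> (\<exists>S \<subseteq> V. \<exists>(m, es) \<in> LF. co_iso_pattern E pos S m es)"

definition Z_pat :: "(nat \<times> nat) list" where
  "Z_pat = [(0,1),(1,3),(3,2)]"

definition Zstar_pat :: "(nat \<times> nat) list" where
  "Zstar_pat = [(1,0),(0,2),(2,3)]"

definition induced_P4 :: "('a \<Rightarrow> 'a \<Rightarrow> bool) \<Rightarrow> 'a set \<Rightarrow> bool" where
  "induced_P4 E S \<longleftrightarrow>
     (\<exists>xs. distinct xs \<and> set xs = S \<and> length xs = 4 \<and>
           (\<forall>i<4. \<forall>j<4. E (xs ! i) (xs ! j) \<longleftrightarrow> (i + 1 = j \<or> j + 1 = i)))"

definition zigzag :: "'a set \<Rightarrow> ('a \<Rightarrow> 'a \<Rightarrow> bool) \<Rightarrow> ('a \<Rightarrow> 'b::linorder) \<Rightarrow> bool" where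
  "zigzag V E pos \<longleftrightarrow>
     (\<forall>S \<subseteq> V. induced_P4 E S \<longrightarrow>
        co_iso_pattern E pos S 4 Z_pat \<or> co_iso_pattern E pos S 4 Zstar_pat)"

definition path_adj :: "nat \<Rightarrow> nat \<Rightarrow> bool" where
  "path_adj i j \<longleftrightarrow> i + 1 = j \<or> j + 1 = i"

end

theory Submission
  imports Defs
begin

(* In P_k the induced copies of P4 are exactly the runs of four consecutive vertices, and P_k
   contains no triangle, no 4-cycle and no claw; so the only members of LF that can occur in
   (P_k, C) are the two circular orderings of P4 that LF contains. Up to isomorphism a circular
   ordering of P4 is exactly one of four: those two, Z and Z*. Hence avoiding the two orderings
   in LF is the same as every induced P4 being ordered as Z or Z*. *)

lemma all_less_4: "(\<forall>i<(4::nat). P i) \<longleftrightarrow> P 0 \<and> P 1 \<and> P 2 \<and> P 3"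
  by (auto simp: less_Suc_eq eval_nat_numeral)

lemma ex_less_4: "(\<exists>i<(4::nat). P i) \<longleftrightarrow> P 0 \<or> P 1 \<or> P 2 \<or> P 3"
  by (auto simp: less_Suc_eq eval_nat_numeral)

lemma less_4_iff: "(i::nat) < 4 \<longleftrightarrow> i = 0 \<or> i = 1 \<or> i = 2 \<or> i = 3"
  by auto

lemma length_3_cases:
  assumes "length xs = 3"
  obtains a b c where "xs = [a, b, c]"
  using assms by (auto simp: eval_nat_numeral length_Suc_conv)

lemma length_4_cases:
  assumes "length xs = 4"
  obtains a b c d where "xs = [a, b, c, d]"
  using assms by (auto simp: eval_nat_numeral length_Suc_conv)

lemma ex_rotate_4:
  "(\<exists>r<4. P (rotate r [a, b, c, d])) \<longleftrightarrow> P [a, b, c, d] \<or> P [b, c, d, a] \<or> P [c, d, a, b] \<or> P [d, a, b, c]"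
  unfolding ex_less_4 by (simp add: rotate_def numeral_eq_Suc)

definition pattern_matches :: "('a \<Rightarrow> 'a \<Rightarrow> bool) \<Rightarrow> 'a list \<Rightarrow> (nat \<times> nat) list \<Rightarrow> bool" where
  "pattern_matches E xs es \<longleftrightarrow>
     (\<forall>i<length xs. \<forall>j<length xs. E (xs ! i) (xs ! j) = pat_adj es i j)"

lemma pattern_matches_nth:
  "pattern_matches E xs es \<Longrightarrow> i < length xs \<Longrightarrow> j < length xs \<Longrightarrow> E (xs ! i) (xs ! j) = pat_adj es i j"
  unfolding pattern_matches_def by blast

lemma pattern_matches_4:
  "pattern_matches E [a, b, c, d] es \<longleftrightarrow>
     (\<forall>i<4. \<forall>j<4. E ([a, b, c, d] ! i) ([a, b, c, d] ! j) = pat_adj es i j)"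
proof -
  have "length [a, b, c, d] = 4"
    by simp
  then show ?thesis
    unfolding pattern_matches_def by (simp only:)
qed

lemma pattern_matches_map:
  "pattern_matches E (map f xs) es \<longleftrightarrow> pattern_matches (\<lambda>u v. E (f u) (f v)) xs es"
  unfolding pattern_matches_def by simp

lemma co_iso_pattern_iff_rotate:
  "co_iso_pattern E pos S m es \<longleftrightarrow>
     (\<exists>xs. distinct xs \<and> set xs = S \<and> length xs = m \<and> sorted_wrt (\<lambda>u v. pos u < pos v) xs \<and>
           (\<exists>r<m. pattern_matches E (rotate r xs) es))"
proof -
  have "pattern_matches E (rotate r xs) es \<longleftrightarrow>
        (\<forall>i<m. \<forall>j<m. E (xs ! ((i + r) mod m)) (xs ! ((j + r) mod m)) = pat_adj es i j)"
    if "length xs = m" for xs :: "'a list" and r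
    using that by (auto simp: pattern_matches_def nth_rotate add.commute)
  then show ?thesis
    unfolding co_iso_pattern_def by blast
qed

lemma clockwise_listing_unique:
  fixes pos :: "'a \<Rightarrow> 'b::linorder"
  assumes "inj_on pos S" "set xs = S" "set ys = S"
    and "sorted_wrt (\<lambda>u v. pos u < pos v) xs" "sorted_wrt (\<lambda>u v. pos u < pos v) ys"
  shows "xs = ys"
proof -
  have "sorted_wrt (<) (map pos xs)" "sorted_wrt (<) (map pos ys)"
    using assms(4,5) by (simp_all add: sorted_wrt_map)
  then have "map pos xs = map pos ys"
    using assms(2,3) by (metis list.set_map sorted_distinct_set_unique strict_sorted_iff)
  then show ?thesis
    using assms(1-3) by (simp add: inj_on_map_eq_map)
qed

lemma clockwise_listing_exists:
  fixes pos :: "'a \<Rightarrow> 'b::linorder"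
  assumes "finite S" "inj_on pos S"
  obtains xs where "distinct xs" "set xs = S" "sorted_wrt (\<lambda>u v. pos u < pos v) xs"
proof -
  obtain ys where ys: "distinct ys" "set ys = S"
    using assms(1) finite_distinct_list by blast
  define xs where "xs = sort_key pos ys"
  have xs: "distinct xs" "set xs = S"
    using ys by (simp_all add: xs_def)
  then have "distinct (map pos xs)"
    using assms(2) by (simp add: distinct_map)
  then have "sorted_wrt (<) (map pos xs)"
    by (simp add: xs_def strict_sorted_iff)
  with xs that show ?thesis
    by (simp add: sorted_wrt_map)
qed

lemma co_iso_pattern_iff_clockwise_listing:
  assumes "inj_on pos S" "distinct xs" "set xs = S" "sorted_wrt (\<lambda>u v. pos u < pos v) xs"
  shows "co_iso_pattern E pos S m es \<longleftrightarrow> length xs = m \<and> (\<exists>r<m. pattern_matches E (rotate r xs) es)"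
  unfolding co_iso_pattern_iff_rotate
  using assms clockwise_listing_unique[OF assms(1)] by blast

lemma co_iso_pattern_imp_pattern_matches:
  assumes "co_iso_pattern E pos S m es"
  obtains ys where "distinct ys" "set ys = S" "length ys = m" "pattern_matches E ys es"
proof -
  obtain xs r where xs: "distinct xs" "set xs = S" "length xs = m"
    and "pattern_matches E (rotate r xs) es"
    using assms unfolding co_iso_pattern_iff_rotate by blast
  moreover have "distinct (rotate r xs)" "set (rotate r xs) = S" "length (rotate r xs) = m"
    using xs by simp_all
  ultimately show thesis
    using that by blast
qed

(* The circular orderings of P4 in LF: the path runs along the circle, resp. its two end edges
   are the crossing diagonals. *)
definition P4_arc_pat :: "(nat \<times> nat) list" where
  "P4_arc_pat = [(0,1),(1,2),(2,3)]"

definition P4_cross_pat :: "(nat \<times> nat) list" where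
  "P4_cross_pat = [(2,0),(0,3),(3,1)]"

lemma P4_patterns_in_LF: "(4, P4_arc_pat) \<in> LF" "(4, P4_cross_pat) \<in> LF"
  by (simp_all add: LF_def P4_arc_pat_def P4_cross_pat_def)

lemma P4_orderings_exclusive:
  assumes "\<exists>r<4. pattern_matches E (rotate r [a, b, c, d]) es"
    and "\<exists>r<4. pattern_matches E (rotate r [a, b, c, d]) es'"
    and "es \<in> {P4_arc_pat, P4_cross_pat}" "es' \<in> {Z_pat, Zstar_pat}"
  shows False
  using assms
  unfolding ex_rotate_4[where P = "\<lambda>xs. pattern_matches E xs es"]
    ex_rotate_4[where P = "\<lambda>xs. pattern_matches E xs es'"] pattern_matches_4 all_less_4
  by (elim insertE emptyE; auto simp: pat_adj_def P4_arc_pat_def P4_cross_pat_def Z_pat_def Zstar_pat_def)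

lemma co_iso_pattern_P4_exclusive:
  assumes "inj_on pos S" "co_iso_pattern E pos S 4 es" "co_iso_pattern E pos S 4 es'"
    and "es \<in> {P4_arc_pat, P4_cross_pat}" "es' \<in> {Z_pat, Zstar_pat}"
  shows False
proof -
  obtain xs where xs: "distinct xs" "set xs = S" "length xs = 4" "sorted_wrt (\<lambda>u v. pos u < pos v) xs"
    using assms(2) unfolding co_iso_pattern_iff_rotate by (elim exE conjE)
  then obtain a b c d where abcd: "xs = [a, b, c, d]"
    using length_4_cases by blast
  have "\<exists>r<4. pattern_matches E (rotate r xs) es" "\<exists>r<4. pattern_matches E (rotate r xs) es'"
    using assms(2,3) co_iso_pattern_iff_clockwise_listing[OF assms(1) xs(1,2,4)] by simp_all
  then show False
    unfolding abcd by (rule P4_orderings_exclusive[OF _ _ assms(4,5)])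
qed

lemma induced_P4_if_co_iso_pattern:
  assumes "co_iso_pattern E pos S 4 es" "es \<in> {P4_arc_pat, P4_cross_pat}"
  shows "induced_P4 E S"
proof -
  obtain ys where ys: "distinct ys" "set ys = S" "length ys = 4" "pattern_matches E ys es"
    using assms(1) co_iso_pattern_imp_pattern_matches by blast
  then obtain a b c d where abcd: "ys = [a, b, c, d]"
    using length_4_cases by blast
  from assms(2) show ?thesis
  proof (elim insertE emptyE)
    assume "es = P4_arc_pat"
    then show ?thesis
      using ys unfolding abcd induced_P4_def pattern_matches_4
      by (intro exI[of _ "[a, b, c, d]"]) (auto simp: all_less_4 pat_adj_def P4_arc_pat_def)
  next
    assume "es = P4_cross_pat"
    then show ?thesis
      using ys unfolding abcd induced_P4_def pattern_matches_4
      by (intro exI[of _ "[c, a, d, b]"]) (auto simp: all_less_4 pat_adj_def P4_cross_pat_def)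
  qed
qed

lemma path_adj_shift: "path_adj (n + a) (n + b) \<longleftrightarrow> path_adj a b"
  by (auto simp: path_adj_def)

lemma path_adj_no_triangle: "path_adj a b \<Longrightarrow> path_adj b c \<Longrightarrow> path_adj c a \<Longrightarrow> False"
  by (auto simp: path_adj_def)

lemma path_adj_no_C4:
  "distinct [a, b, c, d] \<Longrightarrow> path_adj a b \<Longrightarrow> path_adj b c \<Longrightarrow> path_adj c d \<Longrightarrow> path_adj d a \<Longrightarrow> False"
  by (auto simp: path_adj_def)

lemma path_adj_no_claw:
  "distinct [a, b, c, d] \<Longrightarrow> path_adj d a \<Longrightarrow> path_adj d b \<Longrightarrow> path_adj d c \<Longrightarrow> False"
  by (auto simp: path_adj_def)

lemma induced_P4_path_adj:
  assumes "induced_P4 path_adj S"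
  obtains n where "S = {n, n + 1, n + 2, n + 3}"
proof -
  obtain xs where xs: "distinct xs" "set xs = S" "length xs = 4"
    "\<forall>i<4. \<forall>j<4. path_adj (xs ! i) (xs ! j) \<longleftrightarrow> (i + 1 = j \<or> j + 1 = i)"
    using assms unfolding induced_P4_def by blast
  then obtain a b c d where abcd: "xs = [a, b, c, d]"
    using length_4_cases by blast
  have adj: "path_adj a b" "path_adj b c" "path_adj c d" "distinct [a, b, c, d]"
    using xs(1,4) unfolding abcd all_less_4 by simp_all
  show thesis
  proof (cases "b = a + 1")
    case True
    then have "c = a + 2" "d = a + 3"
      using adj by (auto simp: path_adj_def)
    with True xs(2) abcd that[of a] show thesis
      by auto
  next
    case False
    then have "a = d + 3" "b = d + 2" "c = d + 1"
      using adj by (auto simp: path_adj_def)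
    with xs(2) abcd that[of d] show thesis
      by auto
  qed
qed

lemma path_P4_orderings_exhaustive:
  "a < 4 \<Longrightarrow> b < 4 \<Longrightarrow> c < 4 \<Longrightarrow> d < 4 \<Longrightarrow> distinct [a, b, c, d] \<Longrightarrow>
   \<exists>r<4. \<exists>es\<in>{P4_arc_pat, P4_cross_pat, Z_pat, Zstar_pat}. pattern_matches path_adj (rotate r [a, b, c, d]) es"
  unfolding ex_rotate_4[where P = "\<lambda>xs. \<exists>es\<in>{P4_arc_pat, P4_cross_pat, Z_pat, Zstar_pat}. pattern_matches path_adj xs es"]
  unfolding pattern_matches_4 all_less_4
  unfolding less_4_iff
  apply (elim disjE)
  apply (simp_all only: distinct.simps list.set insert_iff empty_iff simp_thms refl zero_neq_one one_neq_zero
      numeral_One[symmetric] numeral_eq_iff num.simps)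
  apply (simp_all add: pat_adj_def path_adj_def P4_arc_pat_def P4_cross_pat_def Z_pat_def Zstar_pat_def)
  done

lemma co_iso_pattern_path_P4_cases:
  assumes "inj_on pos S" "induced_P4 path_adj S"
  shows "\<exists>es\<in>{P4_arc_pat, P4_cross_pat, Z_pat, Zstar_pat}. co_iso_pattern path_adj pos S 4 es"
proof -
  obtain n where S: "S = {n, n + 1, n + 2, n + 3}"
    using assms(2) induced_P4_path_adj by blast
  obtain ys where ys: "distinct ys" "set ys = S" "sorted_wrt (\<lambda>u v. pos u < pos v) ys"
    using clockwise_listing_exists[OF _ assms(1)] S by blast
  define xs where "xs = map (\<lambda>y. y - n) ys"
  have ys_xs: "ys = map ((+) n) xs"
    unfolding xs_def map_map by (rule map_idI[symmetric]) (use ys(2) S in auto)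
  have "length xs = 4"
    using distinct_card[OF ys(1)] ys(2) S unfolding ys_xs by simp
  then obtain a b c d where abcd: "xs = [a, b, c, d]"
    by (rule length_4_cases)
  have "distinct [a, b, c, d]"
    using ys(1) unfolding ys_xs abcd by (simp add: distinct_map)
  moreover have "set [a, b, c, d] \<subseteq> {0..<4}"
    using ys(2) S unfolding xs_def abcd[symmetric] by auto
  ultimately have "\<exists>r<4. \<exists>es\<in>{P4_arc_pat, P4_cross_pat, Z_pat, Zstar_pat}. pattern_matches path_adj (rotate r xs) es"
    unfolding abcd by (intro path_P4_orderings_exhaustive) auto
  moreover have "pattern_matches path_adj (rotate r ys) es = pattern_matches path_adj (rotate r xs) es" for r es
    unfolding ys_xs rotate_map pattern_matches_map path_adj_shift ..
  moreover have "length ys = 4"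
    using \<open>length xs = 4\<close> unfolding ys_xs by simp
  ultimately show ?thesis
    using co_iso_pattern_iff_clockwise_listing[OF assms(1) ys] by auto
qed

lemma path_adj_LF_members:
  assumes "(m, es) \<in> LF" "co_iso_pattern path_adj pos S m es"
  shows "m = 4 \<and> es \<in> {P4_arc_pat, P4_cross_pat}"
proof -
  obtain ys where ys: "distinct ys" "length ys = m" "pattern_matches path_adj ys es"
    using assms(2) co_iso_pattern_imp_pattern_matches by metis
  have adj: "path_adj (ys ! i) (ys ! j)" if "(i, j) \<in> set es" "i < m" "j < m" for i j
    using pattern_matches_nth[OF ys(3)] that ys(2) by (simp add: pat_adj_def)
  from assms(1) consider
      (triangle) "m = 3" "es = [(0,1),(1,2),(2,0)]"
    | (C4) "m = 4" "es = [(0,1),(1,2),(2,3),(3,0)]"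
    | (C4') "m = 4" "es = [(0,1),(1,3),(3,2),(2,0)]"
    | (claw) "m = 4" "es = [(2,0),(2,1),(2,3)]"
    | (P4) "m = 4" "es \<in> {P4_arc_pat, P4_cross_pat}"
    unfolding LF_def P4_arc_pat_def P4_cross_pat_def by auto
  then show ?thesis
  proof cases
    case triangle
    then obtain a b c where "ys = [a, b, c]"
      using ys(2) length_3_cases by blast
    then show ?thesis
      using adj[of 0 1] adj[of 1 2] adj[of 2 0] triangle path_adj_no_triangle by simp
  next
    case C4
    then obtain a b c d where "ys = [a, b, c, d]"
      using ys(2) length_4_cases by blast
    then show ?thesis
      using adj[of 0 1] adj[of 1 2] adj[of 2 3] adj[of 3 0] C4 ys(1) path_adj_no_C4[of a b c d] by simp
  next
    case C4'
    then obtain a b c d where "ys = [a, b, c, d]"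
      using ys(2) length_4_cases by blast
    then show ?thesis
      using adj[of 0 1] adj[of 1 3] adj[of 3 2] adj[of 2 0] C4' ys(1) path_adj_no_C4[of a b d c] by auto
  next
    case claw
    then obtain a b c d where "ys = [a, b, c, d]"
      using ys(2) length_4_cases by blast
    then show ?thesis
      using adj[of 2 0] adj[of 2 1] adj[of 2 3] claw ys(1) path_adj_no_claw[of a b d c] by auto
  qed simp
qed

theorem mainTheorem12:
  fixes k :: nat and pos :: "nat \<Rightarrow> nat"
  assumes "k \<ge> 4"
    and "inj_on pos {0..<k}"
  shows "LF_free {0..<k} path_adj pos \<longleftrightarrow> zigzag {0..<k} path_adj pos"
proof
  assume free: "LF_free {0..<k} path_adj pos"
  show "zigzag {0..<k} path_adj pos"
    unfolding zigzag_def
  proof (intro allI impI)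
    fix S
    assume S: "S \<subseteq> {0..<k}" "induced_P4 path_adj S"
    have "\<not> co_iso_pattern path_adj pos S 4 es" if "es \<in> {P4_arc_pat, P4_cross_pat}" for es
      using free S(1) that P4_patterns_in_LF unfolding LF_free_def by blast
    then show "co_iso_pattern path_adj pos S 4 Z_pat \<or> co_iso_pattern path_adj pos S 4 Zstar_pat"
      using co_iso_pattern_path_P4_cases[OF inj_on_subset[OF assms(2) S(1)] S(2)] by blast
  qed
next
  assume zigzag: "zigzag {0..<k} path_adj pos"
  show "LF_free {0..<k} path_adj pos"
    unfolding LF_free_def
  proof clarify
    fix S m es
    assume S: "S \<subseteq> {0..<k}" and member: "(m, es) \<in> LF" "co_iso_pattern path_adj pos S m es"
    then have P4: "m = 4" "es \<in> {P4_arc_pat, P4_cross_pat}"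
      using path_adj_LF_members by blast+
    then have "induced_P4 path_adj S"
      using member(2) induced_P4_if_co_iso_pattern by blast
    then obtain es' where "es' \<in> {Z_pat, Zstar_pat}" "co_iso_pattern path_adj pos S 4 es'"
      using zigzag S unfolding zigzag_def by blast
    then show False
      using co_iso_pattern_P4_exclusive[OF inj_on_subset[OF assms(2) S]] member(2) P4 by blast
  qed
qed

end
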